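(* Let $\rho\in(0,1)$ and $0<\alpha\le\min\{1/2,2\rho,2(1-\rho)\}$. Let $\Theta=[-\alpha/20,\alpha/20]$ and for $\theta\in\Theta$ set $l_1(\theta)=\frac{4\rho-\alpha}{16-8\alpha}+\theta$, $l_2(\theta)=l_1(\theta)+\rho/2$, $r_2(\theta)=l_2(\theta)+1/4$, $r_1(\theta)=r_2(\theta)+(1-\rho)/2$, $w_1=2\pi/\rho$, $w_2=2\pi/(1-\rho)$. Define $f(x|\theta)=0$ for $x\notin[0,1]$ and for $x\in[0,1]$: $f(x|\theta)=2-\alpha$ if $x\in[0,l_1(\theta)]\cup[r_1(\theta),1]$; $f(x|\theta)=\alpha$ if $x\in(l_2(\theta),r_2(\theta)]$; $f(x|\theta)=\alpha+(1-\alpha)\big(\cos(w_1(x-l_1(\theta)))+1\big)$ if $x\in[l_1(\theta),l_2(\theta)]$; $f(x|\theta)=\alpha+(1-\alpha)\big(\cos(w_2(r_1(\theta)-x))+1\big)$ if $x\in[r_2(\theta),r_1(\theta)]$. Let $F_\theta$ be the corresponding CDF and $x_\theta^*$ the minimizer of $C_\theta(x)=\mathbb{E}_{X\sim f(\cdot|\theta)}[h(x-X)^++b(X-x)^+]$ where $h,b>0$ with $\rho=b/(h+b)$. Then for every $\theta\in\Theta$, $f(\cdot|\theta)$ is a well-defined probability density, and: (A1) $f(x|\theta)\ge\alpha$ for all $x\in[0,x_\theta^*]$; (A2) $\sup\{x:F_\theta(x)<1\}$ is bounded above by an absolute constant independent of $\alpha$; (A3) for every $x$, the map $\theta\mapsto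 f(x|\theta)$ is absolutely continuous on $\Theta$; (A4) for $X\sim f(\cdot|\theta)$, $\mathbb{E}_\theta\left[\frac{\partial}{\partial\theta}\log f(X|\theta)\right]=0$.
   Context: This is a family of "inverted-hat-shaped" parameterized demand densities used as hard instances for a newsvendor lower bound with linear overage cost $h$ and underage cost $b$. *)

theory Defs
  imports "HOL-Analysis.Analysis"
begin

definition nv_l1 :: "real \<Rightarrow> real \<Rightarrow> real \<Rightarrow> real" where
  "nv_l1 \<rho> \<alpha> \<theta> = (4 * \<rho> - \<alpha>) / (16 - 8 * \<alpha>) + \<theta>"
definition nv_l2 :: "real \<Rightarrow> real \<Rightarrow> real \<Rightarrow> real" where
  "nv_l2 \<rho> \<alpha> \<theta> = nv_l1 \<rho> \<alpha> \<theta> + \<rho> / 2"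
definition nv_r2 :: "real \<Rightarrow> real \<Rightarrow> real \<Rightarrow> real" where
  "nv_r2 \<rho> \<alpha> \<theta> = nv_l2 \<rho> \<alpha> \<theta> + 1 / 4"
definition nv_r1 :: "real \<Rightarrow> real \<Rightarrow> real \<Rightarrow> real" where
  "nv_r1 \<rho> \<alpha> \<theta> = nv_r2 \<rho> \<alpha> \<theta> + (1 - \<rho>) / 2"
definition nv_w1 :: "real \<Rightarrow> real" where "nv_w1 \<rho> = 2 * pi / \<rho>"
definition nv_w2 :: "real \<Rightarrow> real" where "nv_w2 \<rho> = 2 * pi / (1 - \<rho>)"

definition nv_cos1 :: "real \<Rightarrow> real \<Rightarrow> real \<Rightarrow> real \<Rightarrow> real" where
  "nv_cos1 \<rho> \<alpha> \<theta> x = \<alpha> + (1 - \<alpha>) * (cos (nv_w1 \<rho> * (x - nv_l1 \<rho> \<alpha> \<theta>)) + 1)"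
definition nv_cos2 :: "real \<Rightarrow> real \<Rightarrow> real \<Rightarrow> real \<Rightarrow> real" where
  "nv_cos2 \<rho> \<alpha> \<theta> x = \<alpha> + (1 - \<alpha>) * (cos (nv_w2 \<rho> * (nv_r1 \<rho> \<alpha> \<theta> - x)) + 1)"

text \<open>The density f(x|theta). The overlapping clauses of the paper are resolved by a
  fixed priority; the theorem asserts that every clause of the paper holds on its set.\<close>
definition nv_f :: "real \<Rightarrow> real \<Rightarrow> real \<Rightarrow> real \<Rightarrow> real" where
  "nv_f \<rho> \<alpha> \<theta> x =
    (if x < 0 \<or> x > 1 then 0
     else if x \<le> nv_l1 \<rho> \<alpha> \<theta> \<or> nv_r1 \<rho> \<alpha> \<theta> \<le> x then 2 - \<alpha>
     else if x \<le> nv_l2 \<rho> \<alpha> \<theta> then nv_cos1 \<rho> \<alpha> \<theta> x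
     else if x \<le> nv_r2 \<rho> \<alpha> \<theta> then \<alpha>
     else nv_cos2 \<rho> \<alpha> \<theta> x)"

definition nv_F :: "real \<Rightarrow> real \<Rightarrow> real \<Rightarrow> real \<Rightarrow> real" where
  "nv_F \<rho> \<alpha> \<theta> x = integral {..x} (nv_f \<rho> \<alpha> \<theta>)"

definition nv_cost :: "real \<Rightarrow> real \<Rightarrow> real \<Rightarrow> real \<Rightarrow> real \<Rightarrow> real \<Rightarrow> real" where
  "nv_cost h b \<rho> \<alpha> \<theta> x =
     integral UNIV (\<lambda>t. (h * max (x - t) 0 + b * max (t - x) 0) * nv_f \<rho> \<alpha> \<theta> t)"

definition abs_cont_on :: "real set \<Rightarrow> (real \<Rightarrow> real) \<Rightarrow> bool" where
  "abs_cont_on S g \<longleftrightarrow>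
    (\<forall>\<epsilon>>0. \<exists>\<delta>>0. \<forall>(n::nat) (a::nat \<Rightarrow> real) (b::nat \<Rightarrow> real).
       (\<forall>i<n. a i \<le> b i \<and> {a i..b i} \<subseteq> S) \<and>
       (\<forall>i<n. \<forall>j<n. i \<noteq> j \<longrightarrow> {a i<..<b i} \<inter> {a j<..<b j} = {}) \<and>
       (\<Sum>i<n. b i - a i) < \<delta>
       \<longrightarrow> (\<Sum>i<n. \<bar>g (b i) - g (a i)\<bar>) < \<epsilon>)"

end

theory Submission
  imports Defs
begin

text \<open>On [0,1] the density is a translate, f(x|\<theta>) = p(x - \<theta>), of one fixed profile p
  that equals 2 - \<alpha> outside [l1(0), r1(0)], is continuous, is bounded below by \<alpha>, and is
  smooth off its four breakpoints with |p'| \<le> (1 - \<alpha>)(w1 + w2). Hence \<theta> \<mapsto> f(x|\<theta>) is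
  Lipschitz, which gives (A3). For x in [0,1] the score times the density is -p'(x - \<theta>),
  whose integral over [0,1] is p(-\<theta>) - p(1 - \<theta>) = 0 because both ends lie on the flat
  part 2 - \<alpha>; this is (A4). Since f vanishes outside [0,1], the CDF reaches 1 at x = 1 (A2)
  and the newsvendor cost grows linearly to the right of 1, so every minimizer lies in [0,1],
  where f \<ge> \<alpha> (A1).\<close>

section \<open>Lipschitz bounds and scores of location families\<close>

lemma has_integral_of_real_derivative:
  fixes G g :: "real \<Rightarrow> real"
  assumes "a \<le> b" "\<And>y. (G has_real_derivative g y) (at y)"
  shows "(g has_integral G b - G a) {a..b}"
  using assms by (intro fundamental_theorem_of_calculus)
    (auto simp: has_real_derivative_iff_has_vector_derivative[symmetric] intro: has_field_derivative_at_within)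

lemma lipschitz_on_imp_abs_cont_on:
  assumes "L-lipschitz_on S g"
  shows "abs_cont_on S g"
  unfolding abs_cont_on_def
proof (intro allI impI)
  fix \<epsilon> :: real assume "0 < \<epsilon>"
  have L: "0 \<le> L" using assms by (rule lipschitz_on_nonneg)
  show "\<exists>\<delta>>0. \<forall>(n::nat) (a::nat \<Rightarrow> real) (b::nat \<Rightarrow> real). (\<forall>i<n. a i \<le> b i \<and> {a i..b i} \<subseteq> S) \<and>
       (\<forall>i<n. \<forall>j<n. i \<noteq> j \<longrightarrow> {a i<..<b i} \<inter> {a j<..<b j} = {}) \<and>
       (\<Sum>i<n. b i - a i) < \<delta> \<longrightarrow> (\<Sum>i<n. \<bar>g (b i) - g (a i)\<bar>) < \<epsilon>"
  proof (intro exI[of _ "\<epsilon> / (L + 1)"] conjI allI impI)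
    show "0 < \<epsilon> / (L + 1)" using \<open>0 < \<epsilon>\<close> L by simp
    fix n :: nat and a b :: "nat \<Rightarrow> real"
    assume H: "(\<forall>i<n. a i \<le> b i \<and> {a i..b i} \<subseteq> S) \<and>
       (\<forall>i<n. \<forall>j<n. i \<noteq> j \<longrightarrow> {a i<..<b i} \<inter> {a j<..<b j} = {}) \<and>
       (\<Sum>i<n. b i - a i) < \<epsilon> / (L + 1)"
    have "(\<Sum>i<n. \<bar>g (b i) - g (a i)\<bar>) \<le> (\<Sum>i<n. L * (b i - a i))"
    proof (rule sum_mono)
      fix i assume "i \<in> {..<n}"
      have "{a i..b i} \<subseteq> S" "a i \<le> b i" using H \<open>i \<in> {..<n}\<close> by auto
      then have "a i \<in> S" "b i \<in> S" by auto
      then show "\<bar>g (b i) - g (a i)\<bar> \<le> L * (b i - a i)"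
        using lipschitz_onD[OF assms, of "b i" "a i"] \<open>a i \<le> b i\<close> by (simp add: dist_real_def)
    qed
    also have "\<dots> = L * (\<Sum>i<n. b i - a i)" by (simp add: sum_distrib_left)
    also have "\<dots> \<le> L * (\<epsilon> / (L + 1))" using H L by (intro mult_left_mono) auto
    also have "\<dots> < \<epsilon>" using \<open>0 < \<epsilon>\<close> L by (simp add: field_simps)
    finally show "(\<Sum>i<n. \<bar>g (b i) - g (a i)\<bar>) < \<epsilon>" .
  qed
qed

lemma bounded_derivative_imp_lipschitz_on_UNIV:
  fixes p :: "real \<Rightarrow> real"
  assumes "finite S" "continuous_on UNIV p"
    and "\<And>y. y \<notin> S \<Longrightarrow> (p has_real_derivative p' y) (at y)"
    and "\<And>y. y \<notin> S \<Longrightarrow> \<bar>p' y\<bar> \<le> L"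
  shows "L-lipschitz_on UNIV p"
proof -
  obtain y0 where "y0 \<notin> S" using \<open>finite S\<close> ex_new_if_finite infinite_UNIV_char_0 by blast
  then have L: "0 \<le> L" using assms(4) by force
  let ?p' = "\<lambda>y. if y \<in> S then 0 else p' y"
  show ?thesis
  proof (rule lipschitz_on_leI[OF _ L])
    fix x y :: real assume "x \<le> y"
    have "(?p' has_integral p y - p x) {x..y}"
      using assms \<open>x \<le> y\<close>
      by (intro fundamental_theorem_of_calculus_interior_strong[of S])
        (auto simp: has_real_derivative_iff_has_vector_derivative[symmetric] intro: continuous_on_subset)
    moreover have "\<bar>?p' z\<bar> \<le> L" for z using assms(4) L by simp
    ultimately have "norm (p y - p x) \<le> L * (y - x)"
      using has_integral_bound[OF L, of ?p' "p y - p x" x y] \<open>x \<le> y\<close> by simp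
    then show "dist (p x) (p y) \<le> L * dist x y"
      using \<open>x \<le> y\<close> by (simp add: dist_real_def abs_minus_commute)
  qed
qed

lemma location_score_has_integral_0:
  fixes p :: "real \<Rightarrow> real"
  assumes "finite S" "continuous_on UNIV p"
    and p': "\<And>y. y \<notin> S \<Longrightarrow> (p has_real_derivative p' y) (at y)"
    and pos: "\<And>y. 0 < p y" and "a \<le> b" and "p (a - \<theta>) = p (b - \<theta>)"
  shows "((\<lambda>x. deriv (\<lambda>t. ln (p (x - t))) \<theta> * p (x - \<theta>)) has_integral 0) {a..b}"
proof -
  let ?T = "(\<lambda>y. y + \<theta>) ` S"
  have "((\<lambda>x. p' (x - \<theta>)) has_integral p (b - \<theta>) - p (a - \<theta>)) {a..b}"
  proof (rule fundamental_theorem_of_calculus_interior_strong[of ?T])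
    show "continuous_on {a..b} (\<lambda>x. p (x - \<theta>))"
      by (rule continuous_on_compose2[OF assms(2)]) (auto intro!: continuous_intros)
    fix x assume "x \<in> {a<..<b} - ?T"
    then have "x - \<theta> \<notin> S" by force
    have "((\<lambda>x. p (x - \<theta>)) has_real_derivative p' (x - \<theta>) * 1) (at x)"
      by (rule DERIV_chain2[where f=p and g="\<lambda>x. x - \<theta>", OF p'[OF \<open>x - \<theta> \<notin> S\<close>]])
        (auto intro!: derivative_eq_intros)
    then show "((\<lambda>x. p (x - \<theta>)) has_vector_derivative p' (x - \<theta>)) (at x)"
      by (simp add: has_real_derivative_iff_has_vector_derivative)
  qed (use assms in auto)
  from has_integral_neg[OF this] have neg: "((\<lambda>x. - p' (x - \<theta>)) has_integral 0) {a..b}"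
    using assms(6) by simp
  have score: "deriv (\<lambda>t. ln (p (x - t))) \<theta> * p (x - \<theta>) = - p' (x - \<theta>)" if "x \<notin> ?T" for x
  proof -
    from that have "x - \<theta> \<notin> S" by force
    have "((\<lambda>t. p (x - t)) has_real_derivative p' (x - \<theta>) * -1) (at \<theta>)"
      by (rule DERIV_chain2[where f=p and g="\<lambda>t. x - t", OF p'[OF \<open>x - \<theta> \<notin> S\<close>]])
        (auto intro!: derivative_eq_intros)
    from DERIV_chain2[where f=ln, OF DERIV_ln_divide[OF pos] this]
    have "((\<lambda>t. ln (p (x - t))) has_real_derivative 1 / p (x - \<theta>) * (p' (x - \<theta>) * -1)) (at \<theta>)" .
    then show ?thesis using pos[of "x - \<theta>"] by (simp add: DERIV_imp_deriv)
  qed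
  show ?thesis
    by (rule has_integral_spike_finite[OF finite_imageI[OF \<open>finite S\<close>, of "\<lambda>y. y + \<theta>"] score neg]) simp
qed

section \<open>Newsvendor cost of a density on the unit interval\<close>

definition newsvendor_loss :: "real \<Rightarrow> real \<Rightarrow> real \<Rightarrow> real \<Rightarrow> real" where
  "newsvendor_loss h b x t = h * max (x - t) 0 + b * max (t - x) 0"

lemma newsvendor_loss_overage:
  "t \<le> u \<Longrightarrow> u \<le> x \<Longrightarrow> newsvendor_loss h b x t = newsvendor_loss h b u t + h * (x - u)"
  by (simp add: newsvendor_loss_def algebra_simps)

lemma newsvendor_loss_underage:
  "x \<le> u \<Longrightarrow> u \<le> t \<Longrightarrow> newsvendor_loss h b x t = newsvendor_loss h b u t + b * (u - x)"
  by (simp add: newsvendor_loss_def algebra_simps)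

lemma newsvendor_loss_lipschitz:
  assumes "0 \<le> h" "0 \<le> b"
  shows "\<bar>newsvendor_loss h b x t - newsvendor_loss h b y t\<bar> \<le> (h + b) * \<bar>x - y\<bar>"
proof -
  let ?o = "max (x - t) 0 - max (y - t) 0" and ?u = "max (t - x) 0 - max (t - y) 0"
  have "\<bar>?o\<bar> \<le> \<bar>x - y\<bar>" "\<bar>?u\<bar> \<le> \<bar>x - y\<bar>"
    by (auto simp: max_def abs_if)
  then have "\<bar>h * ?o\<bar> + \<bar>b * ?u\<bar> \<le> h * \<bar>x - y\<bar> + b * \<bar>x - y\<bar>"
    using assms by (intro add_mono) (auto simp: abs_mult intro: mult_left_mono)
  moreover have "newsvendor_loss h b x t - newsvendor_loss h b y t = h * ?o + b * ?u"
    by (simp add: newsvendor_loss_def algebra_simps)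
  ultimately show ?thesis using abs_triangle_ineq[of "h * ?o" "b * ?u"] by (simp add: distrib_right)
qed

locale unit_density =
  fixes g :: "real \<Rightarrow> real"
  assumes density_nonneg: "\<And>x. 0 \<le> g x"
    and density_vanishes: "\<And>x. x \<notin> {0..1} \<Longrightarrow> g x = 0"
    and density_continuous: "continuous_on {0..1} g"
    and density_has_integral: "(g has_integral 1) {0..1}"
begin

lemma density_has_integral_UNIV: "(g has_integral 1) UNIV"
  by (rule has_integral_on_superset[OF density_has_integral]) (auto simp: density_vanishes)

lemma cdf_eq_1: "1 \<le> x \<Longrightarrow> integral {..x} g = 1"
  by (intro integral_unique has_integral_on_superset[OF density_has_integral]) (auto simp: density_vanishes)

lemma cdf_eq_0: "x < 0 \<Longrightarrow> integral {..x} g = 0"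
  by (intro integral_unique has_integral_is_0) (auto simp: density_vanishes)

lemma cdf_lt_1_imp_lt_1: "integral {..x} g < 1 \<Longrightarrow> x < 1"
  using cdf_eq_1[of x] by (cases "1 \<le> x") auto

lemma bdd_above_cdf_lt_1: "bdd_above {x. integral {..x} g < 1}"
  by (rule bdd_aboveI[of _ 1]) (auto dest: cdf_lt_1_imp_lt_1)

lemma Sup_cdf_lt_1_le_1: "Sup {x. integral {..x} g < 1} \<le> 1"
proof (rule cSup_least)
  have "-1 \<in> {x. integral {..x} g < 1}" using cdf_eq_0[of "-1"] by simp
  then show "{x. integral {..x} g < 1} \<noteq> {}" by blast
qed (auto dest: cdf_lt_1_imp_lt_1)

end

locale newsvendor = unit_density +
  fixes h b :: real
  assumes h_pos: "0 < h" and b_pos: "0 < b"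
begin

abbreviation expected_loss :: "real \<Rightarrow> real" where
  "expected_loss x \<equiv> integral UNIV (\<lambda>t. newsvendor_loss h b x t * g t)"

lemma loss_has_integral: "((\<lambda>t. newsvendor_loss h b x t * g t) has_integral expected_loss x) UNIV"
proof -
  have "continuous_on {0..1} (\<lambda>t. newsvendor_loss h b x t * g t)"
    unfolding newsvendor_loss_def by (intro continuous_intros density_continuous)
  then have "(\<lambda>t. newsvendor_loss h b x t * g t) integrable_on {0..1}"
    by (rule integrable_continuous_interval)
  then have "(\<lambda>t. newsvendor_loss h b x t * g t) integrable_on UNIV"
    by (rule integrable_on_superset) (auto simp: density_vanishes)
  then show ?thesis by (rule integrable_integral)
qed

lemma expected_loss_shift:
  assumes "\<And>t. t \<in> {0..1} \<Longrightarrow> newsvendor_loss h b x t = newsvendor_loss h b u t + c"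
  shows "expected_loss x = expected_loss u + c"
proof -
  have "newsvendor_loss h b x t * g t = newsvendor_loss h b u t * g t + c * g t" for t
    using assms[of t] density_vanishes[of t] by (cases "t \<in> {0..1}") (auto simp: algebra_simps)
  moreover have "((\<lambda>t. newsvendor_loss h b u t * g t + c * g t) has_integral expected_loss u + c * 1) UNIV"
    by (intro has_integral_add has_integral_mult_right loss_has_integral density_has_integral_UNIV)
  ultimately show ?thesis using loss_has_integral[of x] by (simp add: has_integral_unique)
qed

lemma expected_loss_above: "1 \<le> x \<Longrightarrow> expected_loss x = expected_loss 1 + h * (x - 1)"
  by (rule expected_loss_shift, rule newsvendor_loss_overage) auto

lemma expected_loss_below: "x \<le> 0 \<Longrightarrow> expected_loss x = expected_loss 0 + b * (0 - x)"
  by (rule expected_loss_shift, rule newsvendor_loss_underage) auto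

lemma expected_loss_lipschitz: "(h + b)-lipschitz_on UNIV expected_loss"
proof (rule lipschitz_onI)
  fix x y :: real
  let ?d = "\<lambda>t. newsvendor_loss h b x t * g t - newsvendor_loss h b y t * g t"
  and ?B = "(h + b) * \<bar>x - y\<bar>"
  have d: "(?d has_integral expected_loss x - expected_loss y) UNIV"
    by (intro has_integral_diff loss_has_integral)
  have B: "((\<lambda>t. ?B * g t) has_integral ?B * 1) UNIV"
    by (intro has_integral_mult_right density_has_integral_UNIV)
  have "norm (?d t) \<le> ?B * g t" for t
    using newsvendor_loss_lipschitz[of h b x t y] h_pos b_pos density_nonneg[of t]
    by (simp add: left_diff_distrib[symmetric] abs_mult mult_right_mono)
  with integral_norm_bound_integral[OF has_integral_integrable[OF d] has_integral_integrable[OF B]]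
  have "norm (expected_loss x - expected_loss y) \<le> ?B"
    using integral_unique[OF d] integral_unique[OF density_has_integral_UNIV] by simp
  then show "dist (expected_loss x) (expected_loss y) \<le> (h + b) * dist x y"
    by (simp add: dist_real_def)
qed (use h_pos b_pos in simp)

lemma expected_loss_minimizer_exists: "\<exists>x. \<forall>y. expected_loss x \<le> expected_loss y"
proof -
  have cont: "continuous_on {0..1} expected_loss"
    by (rule continuous_on_subset[OF lipschitz_on_continuous_on[OF expected_loss_lipschitz]]) simp
  obtain x where x: "x \<in> {0..1}" "\<forall>y\<in>{0..1}. expected_loss x \<le> expected_loss y"
    using continuous_attains_inf[OF compact_Icc _ cont] by auto
  have "expected_loss x \<le> expected_loss y" for y
  proof -
    consider "y \<in> {0..1}" | "1 < y" | "y < 0" by fastforce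
    then show ?thesis
    proof cases
      case 2
      then have "0 \<le> h * (y - 1)" using h_pos by simp
      moreover have "expected_loss x \<le> expected_loss 1" using x(2) by simp
      ultimately show ?thesis using expected_loss_above[of y] 2 by simp
    next
      case 3
      then have "0 \<le> b * (0 - y)" using b_pos by (simp add: mult_nonneg_nonpos)
      moreover have "expected_loss x \<le> expected_loss 0" using x(2) by simp
      ultimately show ?thesis using expected_loss_below[of y] 3 by simp
    qed (use x in auto)
  qed
  then show ?thesis by blast
qed

lemma minimizer_le_1:
  assumes "\<forall>y. expected_loss x \<le> expected_loss y"
  shows "x \<le> 1"
proof (rule ccontr)
  assume "\<not> x \<le> 1"
  then have "expected_loss 1 < expected_loss x" using expected_loss_above[of x] h_pos by simp
  then show False using assms by (meson not_le)
qed

end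

section \<open>The inverted-hat profile\<close>

text \<open>This is f(.|0) without its restriction to [0,1]: only the profile moves with \<theta>,
  the support [0,1] does not.\<close>
definition hat_profile :: "real \<Rightarrow> real \<Rightarrow> real \<Rightarrow> real" where
  "hat_profile \<rho> \<alpha> y =
    (if y \<le> nv_l1 \<rho> \<alpha> 0 \<or> nv_r1 \<rho> \<alpha> 0 \<le> y then 2 - \<alpha>
     else if y \<le> nv_l2 \<rho> \<alpha> 0 then nv_cos1 \<rho> \<alpha> 0 y
     else if y \<le> nv_r2 \<rho> \<alpha> 0 then \<alpha>
     else nv_cos2 \<rho> \<alpha> 0 y)"

lemmas nv_breakpoint_defs = nv_l1_def nv_l2_def nv_r2_def nv_r1_def

lemma nv_cos1_shift: "nv_cos1 \<rho> \<alpha> \<theta> x = nv_cos1 \<rho> \<alpha> 0 (x - \<theta>)"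
  by (simp add: nv_cos1_def nv_l1_def algebra_simps)

lemma nv_cos2_shift: "nv_cos2 \<rho> \<alpha> \<theta> x = nv_cos2 \<rho> \<alpha> 0 (x - \<theta>)"
  by (simp add: nv_cos2_def nv_breakpoint_defs algebra_simps)

lemma nv_f_eq_hat_profile: "nv_f \<rho> \<alpha> \<theta> x = (if x \<in> {0..1} then hat_profile \<rho> \<alpha> (x - \<theta>) else 0)"
  by (simp add: nv_f_def hat_profile_def nv_cos1_shift[of _ _ \<theta>] nv_cos2_shift[of _ _ \<theta>] nv_breakpoint_defs)

lemma nv_breakpoints_shift:
  "nv_l1 \<rho> \<alpha> \<theta> = nv_l1 \<rho> \<alpha> 0 + \<theta>" "nv_l2 \<rho> \<alpha> \<theta> = nv_l2 \<rho> \<alpha> 0 + \<theta>"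
  "nv_r2 \<rho> \<alpha> \<theta> = nv_r2 \<rho> \<alpha> 0 + \<theta>" "nv_r1 \<rho> \<alpha> \<theta> = nv_r1 \<rho> \<alpha> 0 + \<theta>"
  by (simp_all add: nv_breakpoint_defs)

lemma nv_r1_eq: "nv_r1 \<rho> \<alpha> \<theta> = nv_l1 \<rho> \<alpha> \<theta> + 3 / 4"
  by (simp add: nv_r1_def nv_r2_def nv_l2_def field_simps)

lemma nv_f_outer: "x \<in> {0..1} \<Longrightarrow> x \<le> nv_l1 \<rho> \<alpha> \<theta> \<or> nv_r1 \<rho> \<alpha> \<theta> \<le> x \<Longrightarrow> nv_f \<rho> \<alpha> \<theta> x = 2 - \<alpha>"
  by (simp add: nv_f_def)

lemma nv_cos1_at_l1: "nv_cos1 \<rho> \<alpha> \<theta> (nv_l1 \<rho> \<alpha> \<theta>) = 2 - \<alpha>"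
  by (simp add: nv_cos1_def)

lemma nv_cos2_at_r1: "nv_cos2 \<rho> \<alpha> \<theta> (nv_r1 \<rho> \<alpha> \<theta>) = 2 - \<alpha>"
  by (simp add: nv_cos2_def)

lemma nv_cos1_has_derivative:
  "(nv_cos1 \<rho> \<alpha> \<theta> has_real_derivative
     - ((1 - \<alpha>) * (sin (nv_w1 \<rho> * (y - nv_l1 \<rho> \<alpha> \<theta>)) * nv_w1 \<rho>))) (at y)"
  unfolding nv_cos1_def[abs_def] by (auto intro!: derivative_eq_intros)

lemma nv_cos2_has_derivative:
  "(nv_cos2 \<rho> \<alpha> \<theta> has_real_derivative
     (1 - \<alpha>) * (sin (nv_w2 \<rho> * (nv_r1 \<rho> \<alpha> \<theta> - y)) * nv_w2 \<rho>)) (at y)"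
  unfolding nv_cos2_def[abs_def] by (auto intro!: derivative_eq_intros)

locale hat_params =
  fixes \<rho> \<alpha> :: real
  assumes rho_pos: "0 < \<rho>" and rho_lt_1: "\<rho> < 1"
    and alpha_pos: "0 < \<alpha>" and alpha_le_1: "\<alpha> \<le> 1"
begin

lemma nv_cos1_at_l2: "nv_cos1 \<rho> \<alpha> \<theta> (nv_l2 \<rho> \<alpha> \<theta>) = \<alpha>"
  using rho_pos by (simp add: nv_cos1_def nv_l2_def nv_w1_def)

lemma nv_cos2_at_r2: "nv_cos2 \<rho> \<alpha> \<theta> (nv_r2 \<rho> \<alpha> \<theta>) = \<alpha>"
  using rho_lt_1 by (simp add: nv_cos2_def nv_r1_def nv_w2_def)

lemma hat_profile_outer: "y \<le> nv_l1 \<rho> \<alpha> 0 \<or> nv_r1 \<rho> \<alpha> 0 \<le> y \<Longrightarrow> hat_profile \<rho> \<alpha> y = 2 - \<alpha>"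
  by (simp add: hat_profile_def)

lemma nv_breakpoints_less:
  "nv_l1 \<rho> \<alpha> \<theta> < nv_l2 \<rho> \<alpha> \<theta>" "nv_l2 \<rho> \<alpha> \<theta> < nv_r2 \<rho> \<alpha> \<theta>" "nv_r2 \<rho> \<alpha> \<theta> < nv_r1 \<rho> \<alpha> \<theta>"
  using rho_pos rho_lt_1 by (simp_all add: nv_l2_def nv_r2_def nv_r1_def)

lemma hat_profile_left_slope:
  "nv_l1 \<rho> \<alpha> 0 \<le> y \<Longrightarrow> y \<le> nv_l2 \<rho> \<alpha> 0 \<Longrightarrow> hat_profile \<rho> \<alpha> y = nv_cos1 \<rho> \<alpha> 0 y"
  using nv_breakpoints_less[of 0] nv_cos1_at_l1[of \<rho> \<alpha> 0]
  by (cases "y = nv_l1 \<rho> \<alpha> 0") (auto simp: hat_profile_def)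

lemma hat_profile_floor:
  "nv_l2 \<rho> \<alpha> 0 \<le> y \<Longrightarrow> y \<le> nv_r2 \<rho> \<alpha> 0 \<Longrightarrow> hat_profile \<rho> \<alpha> y = \<alpha>"
  using nv_breakpoints_less[of 0] nv_cos1_at_l2[of 0]
  by (cases "y = nv_l2 \<rho> \<alpha> 0") (auto simp: hat_profile_def)

lemma hat_profile_right_slope:
  "nv_r2 \<rho> \<alpha> 0 \<le> y \<Longrightarrow> y \<le> nv_r1 \<rho> \<alpha> 0 \<Longrightarrow> hat_profile \<rho> \<alpha> y = nv_cos2 \<rho> \<alpha> 0 y"
  using nv_breakpoints_less[of 0] nv_cos2_at_r2[of 0] nv_cos2_at_r1[of \<rho> \<alpha> 0]
  by (cases "y = nv_r2 \<rho> \<alpha> 0 \<or> y = nv_r1 \<rho> \<alpha> 0") (auto simp: hat_profile_def)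

lemma hat_profile_ge: "\<alpha> \<le> hat_profile \<rho> \<alpha> y"
proof -
  have "0 \<le> cos z + 1" for z :: real using cos_ge_minus_one[of z] by linarith
  then have "0 \<le> (1 - \<alpha>) * (cos z + 1)" for z using alpha_le_1 by simp
  then show ?thesis using alpha_le_1 by (auto simp: hat_profile_def nv_cos1_def nv_cos2_def)
qed

lemma hat_profile_pos: "0 < hat_profile \<rho> \<alpha> y"
  using hat_profile_ge alpha_pos by (rule less_le_trans[rotated])

lemma continuous_on_hat_profile: "continuous_on UNIV (hat_profile \<rho> \<alpha>)"
proof -
  let ?l1 = "nv_l1 \<rho> \<alpha> 0" and ?l2 = "nv_l2 \<rho> \<alpha> 0" and ?r2 = "nv_r2 \<rho> \<alpha> 0" and ?r1 = "nv_r1 \<rho> \<alpha> 0"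
  have c1: "continuous_on {..?l1} (hat_profile \<rho> \<alpha>)"
    by (rule continuous_on_eq[OF continuous_on_const[of _ "2 - \<alpha>"]]) (simp add: hat_profile_outer)
  have c2: "continuous_on {?l1..?l2} (hat_profile \<rho> \<alpha>)"
    by (rule continuous_on_eq[of _ "nv_cos1 \<rho> \<alpha> 0"])
      (auto simp: nv_cos1_def hat_profile_left_slope intro!: continuous_intros)
  have c3: "continuous_on {?l2..?r2} (hat_profile \<rho> \<alpha>)"
    by (rule continuous_on_eq[OF continuous_on_const[of _ \<alpha>]]) (simp add: hat_profile_floor)
  have c4: "continuous_on {?r2..?r1} (hat_profile \<rho> \<alpha>)"
    by (rule continuous_on_eq[of _ "nv_cos2 \<rho> \<alpha> 0"])
      (auto simp: nv_cos2_def hat_profile_right_slope intro!: continuous_intros)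
  have c5: "continuous_on {?r1..} (hat_profile \<rho> \<alpha>)"
    by (rule continuous_on_eq[OF continuous_on_const[of _ "2 - \<alpha>"]]) (simp add: hat_profile_outer)
  have "UNIV = {..?l1} \<union> {?l1..?l2} \<union> {?l2..?r2} \<union> {?r2..?r1} \<union> {?r1..}"
    using nv_breakpoints_less[of 0] by auto
  then show ?thesis
    by (metis c1 c2 c3 c4 c5 continuous_on_closed_Un closed_Un closed_atMost closed_atLeast
        closed_atLeastAtMost)
qed

lemma abs_cosine_slope_le: "0 \<le> w \<Longrightarrow> \<bar>(1 - \<alpha>) * (sin u * w)\<bar> \<le> (1 - \<alpha>) * w"
  using alpha_le_1 abs_sin_le_one[of u] by (simp add: abs_mult mult_left_le_one_le mult_left_mono)

lemma hat_profile_has_derivative: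
  assumes "y \<notin> {nv_l1 \<rho> \<alpha> 0, nv_l2 \<rho> \<alpha> 0, nv_r2 \<rho> \<alpha> 0, nv_r1 \<rho> \<alpha> 0}"
  shows "\<exists>D. (hat_profile \<rho> \<alpha> has_real_derivative D) (at y) \<and> \<bar>D\<bar> \<le> (1 - \<alpha>) * (nv_w1 \<rho> + nv_w2 \<rho>)"
proof -
  let ?l1 = "nv_l1 \<rho> \<alpha> 0" and ?l2 = "nv_l2 \<rho> \<alpha> 0" and ?r2 = "nv_r2 \<rho> \<alpha> 0" and ?r1 = "nv_r1 \<rho> \<alpha> 0"
  let ?L = "(1 - \<alpha>) * (nv_w1 \<rho> + nv_w2 \<rho>)"
  have w: "0 < nv_w1 \<rho>" "0 < nv_w2 \<rho>" using rho_pos rho_lt_1 by (simp_all add: nv_w1_def nv_w2_def)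
  have piece: "\<exists>D. (hat_profile \<rho> \<alpha> has_real_derivative D) (at y) \<and> \<bar>D\<bar> \<le> ?L"
    if "open U" "y \<in> U" "\<And>z. z \<in> U \<Longrightarrow> k z = hat_profile \<rho> \<alpha> z"
      "(k has_real_derivative D) (at y)" "\<bar>D\<bar> \<le> ?L" for U k D
    using has_field_derivative_transform_within_open[OF that(4,1,2,3)] that(5) by blast
  have L: "0 \<le> ?L" using w alpha_le_1 by simp
  consider "y < ?l1" | "?l1 < y" "y < ?l2" | "?l2 < y" "y < ?r2" | "?r2 < y" "y < ?r1" | "?r1 < y"
    using assms nv_breakpoints_less[of 0] by fastforce
  then show ?thesis
  proof cases
    case 1
    then show ?thesis
      by (intro piece[of "{..<?l1}" "\<lambda>_. 2 - \<alpha>" 0]) (auto simp: hat_profile_outer L)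
  next
    case 2
    have "\<bar>(1 - \<alpha>) * (sin (nv_w1 \<rho> * (y - ?l1)) * nv_w1 \<rho>)\<bar> \<le> ?L"
      using abs_cosine_slope_le[of "nv_w1 \<rho>"] w alpha_le_1 by (smt (verit) mult_left_mono)
    with 2 show ?thesis
      by (intro piece[of "{?l1<..<?l2}" "nv_cos1 \<rho> \<alpha> 0"
            "- ((1 - \<alpha>) * (sin (nv_w1 \<rho> * (y - ?l1)) * nv_w1 \<rho>))"])
        (auto simp: hat_profile_left_slope nv_cos1_has_derivative)
  next
    case 3
    then show ?thesis
      by (intro piece[of "{?l2<..<?r2}" "\<lambda>_. \<alpha>" 0]) (auto simp: hat_profile_floor L)
  next
    case 4
    have "\<bar>(1 - \<alpha>) * (sin (nv_w2 \<rho> * (?r1 - y)) * nv_w2 \<rho>)\<bar> \<le> ?L"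
      using abs_cosine_slope_le[of "nv_w2 \<rho>"] w alpha_le_1 by (smt (verit) mult_left_mono)
    with 4 show ?thesis
      by (intro piece[of "{?r2<..<?r1}" "nv_cos2 \<rho> \<alpha> 0"
            "(1 - \<alpha>) * (sin (nv_w2 \<rho> * (?r1 - y)) * nv_w2 \<rho>)"])
        (auto simp: hat_profile_right_slope nv_cos2_has_derivative)
  next
    case 5
    then show ?thesis
      by (intro piece[of "{?r1<..}" "\<lambda>_. 2 - \<alpha>" 0]) (auto simp: hat_profile_outer L)
  qed
qed

lemma hat_profile_deriv:
  assumes "y \<notin> {nv_l1 \<rho> \<alpha> 0, nv_l2 \<rho> \<alpha> 0, nv_r2 \<rho> \<alpha> 0, nv_r1 \<rho> \<alpha> 0}"
  shows "(hat_profile \<rho> \<alpha> has_real_derivative deriv (hat_profile \<rho> \<alpha>) y) (at y)"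
    and "\<bar>deriv (hat_profile \<rho> \<alpha>) y\<bar> \<le> (1 - \<alpha>) * (nv_w1 \<rho> + nv_w2 \<rho>)"
  using hat_profile_has_derivative[OF assms] by (auto simp: DERIV_imp_deriv)

lemma lipschitz_on_hat_profile: "((1 - \<alpha>) * (nv_w1 \<rho> + nv_w2 \<rho>))-lipschitz_on UNIV (hat_profile \<rho> \<alpha>)"
  by (rule bounded_derivative_imp_lipschitz_on_UNIV[where p' = "deriv (hat_profile \<rho> \<alpha>)"
        and S = "{nv_l1 \<rho> \<alpha> 0, nv_l2 \<rho> \<alpha> 0, nv_r2 \<rho> \<alpha> 0, nv_r1 \<rho> \<alpha> 0}"])
    (simp_all add: continuous_on_hat_profile hat_profile_deriv)

lemma lipschitz_on_nv_f_parameter: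
  "((1 - \<alpha>) * (nv_w1 \<rho> + nv_w2 \<rho>))-lipschitz_on UNIV (\<lambda>t. nv_f \<rho> \<alpha> t x)"
proof (cases "x \<in> {0..1}")
  case True
  show ?thesis
  proof (rule lipschitz_onI)
    fix s t
    show "dist (nv_f \<rho> \<alpha> s x) (nv_f \<rho> \<alpha> t x) \<le> (1 - \<alpha>) * (nv_w1 \<rho> + nv_w2 \<rho>) * dist s t"
      using lipschitz_onD[OF lipschitz_on_hat_profile, of "x - s" "x - t"] True
      by (simp add: nv_f_eq_hat_profile dist_real_def abs_minus_commute)
  qed (rule lipschitz_on_nonneg[OF lipschitz_on_hat_profile])
next
  case False
  then have "(\<lambda>t. nv_f \<rho> \<alpha> t x) = (\<lambda>t. 0)" by (auto simp: nv_f_eq_hat_profile)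
  then show ?thesis
    by (metis lipschitz_on_mono[OF lipschitz_on_constant order_refl
          lipschitz_on_nonneg[OF lipschitz_on_hat_profile]])
qed

lemma nv_f_left_slope:
  "x \<in> {0..1} \<Longrightarrow> nv_l1 \<rho> \<alpha> \<theta> \<le> x \<Longrightarrow> x \<le> nv_l2 \<rho> \<alpha> \<theta> \<Longrightarrow> nv_f \<rho> \<alpha> \<theta> x = nv_cos1 \<rho> \<alpha> \<theta> x"
  by (simp add: nv_f_eq_hat_profile hat_profile_left_slope nv_breakpoints_shift[of _ _ \<theta>] nv_cos1_shift[of _ _ \<theta>])

lemma nv_f_floor:
  "x \<in> {0..1} \<Longrightarrow> nv_l2 \<rho> \<alpha> \<theta> \<le> x \<Longrightarrow> x \<le> nv_r2 \<rho> \<alpha> \<theta> \<Longrightarrow> nv_f \<rho> \<alpha> \<theta> x = \<alpha>"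
  by (simp add: nv_f_eq_hat_profile hat_profile_floor nv_breakpoints_shift[of _ _ \<theta>])

lemma nv_f_right_slope:
  "x \<in> {0..1} \<Longrightarrow> nv_r2 \<rho> \<alpha> \<theta> \<le> x \<Longrightarrow> x \<le> nv_r1 \<rho> \<alpha> \<theta> \<Longrightarrow> nv_f \<rho> \<alpha> \<theta> x = nv_cos2 \<rho> \<alpha> \<theta> x"
  by (simp add: nv_f_eq_hat_profile hat_profile_right_slope nv_breakpoints_shift[of _ _ \<theta>] nv_cos2_shift[of _ _ \<theta>])

lemma nv_pieces_cover:
  "{0..1} \<subseteq> {0..nv_l1 \<rho> \<alpha> \<theta>} \<union> {nv_r1 \<rho> \<alpha> \<theta>..1} \<union> {nv_l2 \<rho> \<alpha> \<theta><..nv_r2 \<rho> \<alpha> \<theta>}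
     \<union> {nv_l1 \<rho> \<alpha> \<theta>..nv_l2 \<rho> \<alpha> \<theta>} \<union> {nv_r2 \<rho> \<alpha> \<theta>..nv_r1 \<rho> \<alpha> \<theta>}"
  using nv_breakpoints_less[of \<theta>] by auto

lemma nv_f_ge: "x \<in> {0..1} \<Longrightarrow> \<alpha> \<le> nv_f \<rho> \<alpha> \<theta> x"
  by (simp add: nv_f_eq_hat_profile hat_profile_ge)

lemma nv_f_nonneg: "0 \<le> nv_f \<rho> \<alpha> \<theta> x"
  using hat_profile_pos by (simp add: nv_f_eq_hat_profile less_imp_le)

lemma nv_cos1_has_integral: "(nv_cos1 \<rho> \<alpha> \<theta> has_integral \<rho> / 2) {nv_l1 \<rho> \<alpha> \<theta>..nv_l2 \<rho> \<alpha> \<theta>}"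
proof -
  let ?w = "nv_w1 \<rho>" and ?l = "nv_l1 \<rho> \<alpha> \<theta>"
  let ?G = "\<lambda>y. \<alpha> * y + (1 - \<alpha>) * (sin (?w * (y - ?l)) / ?w + y)"
  have w: "?w \<noteq> 0" "?w * (\<rho> / 2) = pi" using rho_pos by (simp_all add: nv_w1_def)
  have int: "(nv_cos1 \<rho> \<alpha> \<theta> has_integral ?G (?l + \<rho> / 2) - ?G ?l) {?l..?l + \<rho> / 2}"
    using rho_pos w(1) unfolding nv_cos1_def
    by (intro has_integral_of_real_derivative) (auto intro!: derivative_eq_intros simp: field_simps)
  have "?w * (?l + \<rho> / 2 - ?l) = pi" using w(2) by simp
  then have "?G (?l + \<rho> / 2) - ?G ?l = \<rho> / 2" by (simp only:) (simp add: field_simps)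
  with int show ?thesis by (simp only: nv_l2_def)
qed

lemma nv_cos2_has_integral: "(nv_cos2 \<rho> \<alpha> \<theta> has_integral (1 - \<rho>) / 2) {nv_r2 \<rho> \<alpha> \<theta>..nv_r1 \<rho> \<alpha> \<theta>}"
proof -
  let ?w = "nv_w2 \<rho>" and ?r = "nv_r1 \<rho> \<alpha> \<theta>"
  let ?G = "\<lambda>y. \<alpha> * y + (1 - \<alpha>) * (- sin (?w * (?r - y)) / ?w + y)"
  have w: "?w \<noteq> 0" "?w * ((1 - \<rho>) / 2) = pi" using rho_lt_1 by (simp_all add: nv_w2_def)
  have int: "(nv_cos2 \<rho> \<alpha> \<theta> has_integral ?G ?r - ?G (?r - (1 - \<rho>) / 2)) {?r - (1 - \<rho>) / 2..?r}"
    using rho_lt_1 w(1) unfolding nv_cos2_def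
    by (intro has_integral_of_real_derivative) (auto intro!: derivative_eq_intros simp: field_simps)
  have "?w * (?r - (?r - (1 - \<rho>) / 2)) = pi" using w(2) by simp
  then have "?G ?r - ?G (?r - (1 - \<rho>) / 2) = (1 - \<rho>) / 2" by (simp only:) (simp add: field_simps)
  moreover have "?r - (1 - \<rho>) / 2 = nv_r2 \<rho> \<alpha> \<theta>" by (simp add: nv_r1_def)
  ultimately show ?thesis using int by (simp only:)
qed

end

lemma nv_breakpoints_in_unit_interval:
  assumes "0 < \<rho>" "0 < \<alpha>" "\<alpha> \<le> 2 * \<rho>" "\<alpha> \<le> 2 * (1 - \<rho>)" "\<bar>\<theta>\<bar> \<le> \<alpha> / 20"
  shows "0 < nv_l1 \<rho> \<alpha> \<theta>" "nv_r1 \<rho> \<alpha> \<theta> < 1"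
proof -
  have \<theta>: "- \<alpha> / 20 \<le> \<theta>" "\<theta> \<le> \<alpha> / 20" using assms(5) by (simp_all add: abs_le_iff)
  have \<alpha>\<alpha>: "0 \<le> \<alpha> * \<alpha>" by simp
  have "0 < 16 - 8 * \<alpha>" using assms(1,4) by simp
  moreover have "\<alpha> / 20 * (16 - 8 * \<alpha>) < 4 * \<rho> - \<alpha>"
    using assms(1,3) by (simp add: algebra_simps) (use \<alpha>\<alpha> in linarith)
  ultimately have "\<alpha> / 20 < (4 * \<rho> - \<alpha>) / (16 - 8 * \<alpha>)" by (simp add: pos_less_divide_eq)
  then show "0 < nv_l1 \<rho> \<alpha> \<theta>" using \<theta> unfolding nv_l1_def by linarith
  have "4 * \<rho> - \<alpha> < (1 / 4 - \<alpha> / 20) * (16 - 8 * \<alpha>)"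
    using assms(2,4) by (simp add: algebra_simps) (use \<alpha>\<alpha> in linarith)
  with \<open>0 < 16 - 8 * \<alpha>\<close> have "(4 * \<rho> - \<alpha>) / (16 - 8 * \<alpha>) < 1 / 4 - \<alpha> / 20"
    by (simp add: pos_divide_less_eq)
  then show "nv_r1 \<rho> \<alpha> \<theta> < 1" using \<theta> unfolding nv_r1_eq nv_l1_def by linarith
qed

locale hat_density = hat_params +
  fixes \<theta> :: real
  assumes l1_nonneg: "0 \<le> nv_l1 \<rho> \<alpha> \<theta>" and r1_le_1: "nv_r1 \<rho> \<alpha> \<theta> \<le> 1"
begin

lemma nv_f_has_integral: "(nv_f \<rho> \<alpha> \<theta> has_integral 1) {0..1}"
proof -
  let ?f = "nv_f \<rho> \<alpha> \<theta>"
  let ?l1 = "nv_l1 \<rho> \<alpha> \<theta>" and ?l2 = "nv_l2 \<rho> \<alpha> \<theta>" and ?r2 = "nv_r2 \<rho> \<alpha> \<theta>" and ?r1 = "nv_r1 \<rho> \<alpha> \<theta>"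
  have ord: "0 \<le> ?l1" "?l1 \<le> ?l2" "?l2 \<le> ?r2" "?r2 \<le> ?r1" "?r1 \<le> 1"
    using l1_nonneg r1_le_1 nv_breakpoints_less[of \<theta>] by auto
  have const: "(?f has_integral c * (v - u)) {u..v}"
    if "u \<le> v" "\<And>x. x \<in> {u..v} \<Longrightarrow> ?f x = c" for c u v
  proof -
    have "((\<lambda>_. c) has_integral c * (v - u)) {u..v}"
      using has_integral_const_real[of c u v] \<open>u \<le> v\<close> by (simp add: mult.commute)
    then show ?thesis by (rule has_integral_eq[rotated]) (simp add: that(2))
  qed
  have i1: "(?f has_integral (2 - \<alpha>) * (?l1 - 0)) {0..?l1}"
    using ord by (intro const) (simp_all add: nv_f_outer)
  have i2: "(?f has_integral \<rho> / 2) {?l1..?l2}"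
  proof (rule has_integral_eq[rotated, OF nv_cos1_has_integral])
    fix x assume "x \<in> {?l1..?l2}"
    with ord show "nv_cos1 \<rho> \<alpha> \<theta> x = ?f x" by (intro nv_f_left_slope[symmetric]) auto
  qed
  have i3: "(?f has_integral \<alpha> * (?r2 - ?l2)) {?l2..?r2}"
    using ord by (intro const) (simp_all add: nv_f_floor)
  have i4: "(?f has_integral (1 - \<rho>) / 2) {?r2..?r1}"
  proof (rule has_integral_eq[rotated, OF nv_cos2_has_integral])
    fix x assume "x \<in> {?r2..?r1}"
    with ord show "nv_cos2 \<rho> \<alpha> \<theta> x = ?f x" by (intro nv_f_right_slope[symmetric]) auto
  qed
  have i5: "(?f has_integral (2 - \<alpha>) * (1 - ?r1)) {?r1..1}"
    using ord by (intro const) (simp_all add: nv_f_outer)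
  have "(?f has_integral (2 - \<alpha>) * (?l1 - 0) + \<rho> / 2 + \<alpha> * (?r2 - ?l2) + (1 - \<rho>) / 2 + (2 - \<alpha>) * (1 - ?r1)) {0..1}"
    by (rule has_integral_combine[OF _ _ has_integral_combine[OF _ _ has_integral_combine[OF _ _
        has_integral_combine[OF _ _ i1 i2] i3] i4] i5]) (use ord in linarith)+
  moreover have "?r2 - ?l2 = 1 / 4" "?r1 = ?l1 + 3 / 4" by (simp_all add: nv_r2_def nv_r1_eq)
  then have "(2 - \<alpha>) * (?l1 - 0) + \<rho> / 2 + \<alpha> * (?r2 - ?l2) + (1 - \<rho>) / 2 + (2 - \<alpha>) * (1 - ?r1) = 1"
    by (simp add: field_simps)
  ultimately show ?thesis by simp
qed

sublocale unit_density "nv_f \<rho> \<alpha> \<theta>"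
proof
  show "0 \<le> nv_f \<rho> \<alpha> \<theta> x" for x by (rule nv_f_nonneg)
  show "nv_f \<rho> \<alpha> \<theta> x = 0" if "x \<notin> {0..1}" for x using that by (auto simp: nv_f_def)
  have "continuous_on {0..1} (\<lambda>x. hat_profile \<rho> \<alpha> (x - \<theta>))"
    by (rule continuous_on_compose2[OF continuous_on_hat_profile]) (auto intro: continuous_intros)
  then show "continuous_on {0..1} (nv_f \<rho> \<alpha> \<theta>)"
    by (rule continuous_on_eq) (simp add: nv_f_eq_hat_profile)
qed (rule nv_f_has_integral)

lemma score_has_integral_zero:
  "((\<lambda>x. deriv (\<lambda>t. ln (nv_f \<rho> \<alpha> t x)) \<theta> * nv_f \<rho> \<alpha> \<theta> x) has_integral 0) UNIV"
proof -
  have "hat_profile \<rho> \<alpha> (0 - \<theta>) = hat_profile \<rho> \<alpha> (1 - \<theta>)"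
    using l1_nonneg r1_le_1 by (simp add: hat_profile_outer nv_breakpoints_shift[of _ _ \<theta>])
  from location_score_has_integral_0[OF _ continuous_on_hat_profile hat_profile_deriv(1) hat_profile_pos
      zero_le_one this, of "{nv_l1 \<rho> \<alpha> 0, nv_l2 \<rho> \<alpha> 0, nv_r2 \<rho> \<alpha> 0, nv_r1 \<rho> \<alpha> 0}"]
  have "((\<lambda>x. deriv (\<lambda>t. ln (hat_profile \<rho> \<alpha> (x - t))) \<theta> * hat_profile \<rho> \<alpha> (x - \<theta>)) has_integral 0) {0..1}"
    by simp
  then have "((\<lambda>x. deriv (\<lambda>t. ln (nv_f \<rho> \<alpha> t x)) \<theta> * nv_f \<rho> \<alpha> \<theta> x) has_integral 0) {0..1}"
    by (rule has_integral_eq[rotated]) (simp add: nv_f_eq_hat_profile)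
  then show ?thesis
    by (rule has_integral_on_superset) (simp_all add: density_vanishes)
qed

end

theorem lemma2:
  shows "\<exists>K::real. \<forall>(h::real) (b::real) (\<rho>::real) (\<alpha>::real) (\<theta>::real).
    0 < h \<and> 0 < b \<and> \<rho> = b / (h + b) \<and> 0 < \<rho> \<and> \<rho> < 1 \<and>
    0 < \<alpha> \<and> \<alpha> \<le> min (1/2) (min (2 * \<rho>) (2 * (1 - \<rho>))) \<and>
    \<theta> \<in> {-\<alpha>/20..\<alpha>/20}
    \<longrightarrow>
      \<comment> \<open>well-definedness: the pieces cover [0,1] and every clause of the definition holds\<close>
      ({0..1} \<subseteq> {0..nv_l1 \<rho> \<alpha> \<theta>} \<union> {nv_r1 \<rho> \<alpha> \<theta>..1} \<union> {nv_l2 \<rho> \<alpha> \<theta><..nv_r2 \<rho> \<alpha> \<theta>}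
                 \<union> {nv_l1 \<rho> \<alpha> \<theta>..nv_l2 \<rho> \<alpha> \<theta>} \<union> {nv_r2 \<rho> \<alpha> \<theta>..nv_r1 \<rho> \<alpha> \<theta>}) \<and>
      (\<forall>x. x \<notin> {0..1} \<longrightarrow> nv_f \<rho> \<alpha> \<theta> x = 0) \<and>
      (\<forall>x\<in>{0..1}.
         (x \<in> {0..nv_l1 \<rho> \<alpha> \<theta>} \<union> {nv_r1 \<rho> \<alpha> \<theta>..1} \<longrightarrow> nv_f \<rho> \<alpha> \<theta> x = 2 - \<alpha>) \<and>
         (x \<in> {nv_l2 \<rho> \<alpha> \<theta><..nv_r2 \<rho> \<alpha> \<theta>} \<longrightarrow> nv_f \<rho> \<alpha> \<theta> x = \<alpha>) \<and>
         (x \<in> {nv_l1 \<rho> \<alpha> \<theta>..nv_l2 \<rho> \<alpha> \<theta>} \<longrightarrow> nv_f \<rho> \<alpha> \<theta> x = nv_cos1 \<rho> \<alpha> \<theta> x) \<and>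
         (x \<in> {nv_r2 \<rho> \<alpha> \<theta>..nv_r1 \<rho> \<alpha> \<theta>} \<longrightarrow> nv_f \<rho> \<alpha> \<theta> x = nv_cos2 \<rho> \<alpha> \<theta> x)) \<and>
      \<comment> \<open>probability density\<close>
      (\<forall>x. 0 \<le> nv_f \<rho> \<alpha> \<theta> x) \<and> (nv_f \<rho> \<alpha> \<theta> has_integral 1) UNIV \<and>
      \<comment> \<open>(A1), with existence of the minimizer x*\<close>
      (\<exists>xs. \<forall>y. nv_cost h b \<rho> \<alpha> \<theta> xs \<le> nv_cost h b \<rho> \<alpha> \<theta> y) \<and>
      (\<forall>xs. (\<forall>y. nv_cost h b \<rho> \<alpha> \<theta> xs \<le> nv_cost h b \<rho> \<alpha> \<theta> y) \<longrightarrow>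
            (\<forall>x\<in>{0..xs}. \<alpha> \<le> nv_f \<rho> \<alpha> \<theta> x)) \<and>
      \<comment> \<open>(A2)\<close>
      bdd_above {x. nv_F \<rho> \<alpha> \<theta> x < 1} \<and> Sup {x. nv_F \<rho> \<alpha> \<theta> x < 1} \<le> K \<and>
      \<comment> \<open>(A3)\<close>
      (\<forall>x. abs_cont_on {-\<alpha>/20..\<alpha>/20} (\<lambda>t. nv_f \<rho> \<alpha> t x)) \<and>
      \<comment> \<open>(A4): expectation of the score is zero\<close>
      ((\<lambda>x. deriv (\<lambda>t. ln (nv_f \<rho> \<alpha> t x)) \<theta> * nv_f \<rho> \<alpha> \<theta> x) has_integral 0) UNIV"
  apply (intro exI[of _ 1] allI impI)
  subgoal premises H for h b \<rho> \<alpha> \<theta>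
  proof -
    have \<theta>: "\<bar>\<theta>\<bar> \<le> \<alpha> / 20" using H unfolding abs_le_iff by auto
    interpret hat_density \<rho> \<alpha> \<theta>
      using H nv_breakpoints_in_unit_interval[OF _ _ _ _ \<theta>] by unfold_locales (auto simp: less_imp_le)
    interpret newsvendor "nv_f \<rho> \<alpha> \<theta>" h b
      using H by unfold_locales auto
    have cost: "nv_cost h b \<rho> \<alpha> \<theta> = expected_loss"
      by (simp add: fun_eq_iff nv_cost_def newsvendor_loss_def)
    show ?thesis
      unfolding cost nv_F_def
      by (intro conjI allI ballI impI nv_pieces_cover density_vanishes density_nonneg
          density_has_integral_UNIV expected_loss_minimizer_exists bdd_above_cdf_lt_1 Sup_cdf_lt_1_le_1
          lipschitz_on_imp_abs_cont_on[OF lipschitz_on_subset[OF lipschitz_on_nv_f_parameter]]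
          score_has_integral_zero)
        (auto intro: nv_f_outer nv_f_floor nv_f_left_slope nv_f_right_slope,
          metis atLeastAtMost_iff minimizer_le_1 nv_f_ge order_trans)
  qed
  done

end
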